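(* Let $\mu,\nu,\rho$ be nonnegative integers with $2\rho\le\nu-1$. For integers $m,n$ put $m'=m+q^{\mu-\rho}$ and $n'=n+q^\rho$. Then $$\#\big\{(m,n)\in\mathbb{Z}^2:\ q^{\mu-1}\le m<q^\mu,\ q^{\nu-1}\le n<q^\nu,\ T_q(mn)\ne T_q(m'n')\big\}\ll\log(q^{\mu+\nu})\,q^{\mu+\nu-\rho}.$$
   Context: $q\ge2$ is a fixed integer; for real $x>0$, $T_q(x)=\lfloor\log x/\log q\rfloor$. The implied constant depends at most on $q$. *)

theory Defs
  imports Complex_Main
begin

definition Tq :: "nat \<Rightarrow> real \<Rightarrow> int" where
  "Tq q x = \<lfloor>ln x / ln (real q)\<rfloor>"

end

theory Submission
  imports Defs
begin

text \<open>
  If \<open>T_q(mn) \<noteq> T_q(m'n')\<close>, some power \<open>q^k\<close> lies in \<open>(mn, m'n']\<close>, and the sizes of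
  \<open>m\<close> and \<open>n\<close> force \<open>k \<in> {\<mu>+\<nu>-1, \<mu>+\<nu>, \<mu>+\<nu>+1}\<close>. For fixed \<open>m\<close> and \<open>k\<close>, the condition
  \<open>mn < q^k \<le> m'n'\<close> confines \<open>n\<close> to an interval of length
  \<open>q^k q^(\<mu>-\<rho>) / (m m') + q^\<rho> \<le> (q^3 + 1) q^(\<nu>-\<rho>)\<close>, because \<open>m \<ge> q^(\<mu>-1)\<close> and \<open>2\<rho> \<le> \<nu>\<close>.
  Summing over the at most \<open>q^\<mu>\<close> values of \<open>m\<close> gives \<open>O(q^(\<mu>+\<nu>-\<rho>))\<close>.
\<close>

lemma finite_int_interval: "finite {n::int. a \<le> real_of_int n \<and> real_of_int n < b}"
proof -
  have "{n::int. a \<le> real_of_int n \<and> real_of_int n < b} = {\<lceil>a\<rceil>..<\<lceil>b\<rceil>}"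
    by (auto simp: ceiling_le_iff less_ceiling_iff)
  then show ?thesis by simp
qed

lemma card_int_interval_le:
  fixes a b :: real
  assumes "a \<le> b"
  shows "real (card {n::int. a \<le> real_of_int n \<and> real_of_int n < b}) \<le> b - a + 1"
proof -
  have "{n::int. a \<le> real_of_int n \<and> real_of_int n < b} = {\<lceil>a\<rceil>..<\<lceil>b\<rceil>}"
    by (auto simp: ceiling_le_iff less_ceiling_iff)
  moreover have "\<lceil>a\<rceil> \<le> \<lceil>b\<rceil>" using assms by (rule ceiling_mono)
  ultimately show ?thesis by (simp del: of_int_diff) linarith
qed

lemma power_int_less_power_int_iff:
  fixes x :: "'a::linordered_field"
  assumes "x > 1"
  shows "x powi m < x powi n \<longleftrightarrow> m < n"
  using assms power_int_strict_increasing[of m n x] power_int_increasing[of n m x]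
  by (cases "m < n") auto

lemma Tq_eq_floor_log: "Tq q x = \<lfloor>log (real q) x\<rfloor>"
  by (simp add: Tq_def log_def)

lemma Tq_ne_imp_power_between:
  assumes "q \<ge> 2" "0 < x" "x \<le> y" "Tq q x \<noteq> Tq q y"
  shows "\<exists>k. x < real q powi k \<and> real q powi k \<le> y"
proof (intro exI conjI)
  have q: "real q > 1" using assms(1) by simp
  have "Tq q x \<le> Tq q y"
    unfolding Tq_eq_floor_log using assms q by (intro floor_mono) simp
  with assms(4) have "log (real q) x < real_of_int (Tq q y)"
    unfolding Tq_eq_floor_log by linarith
  then show "x < real q powi Tq q y"
    using assms(2) q by (simp add: log_less_iff powr_real_of_int')
  have "real_of_int (Tq q y) \<le> log (real q) y"
    unfolding Tq_eq_floor_log by linarith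
  then show "real q powi Tq q y \<le> y"
    using assms(2,3) q by (simp add: le_log_iff powr_real_of_int')
qed

definition crossing_fiber :: "real \<Rightarrow> real \<Rightarrow> real \<Rightarrow> real \<Rightarrow> int set" where
  "crossing_fiber m d e P = {n. m * real_of_int n < P \<and> P \<le> (m + d) * (real_of_int n + e)}"

lemma crossing_fiber_eq_interval:
  assumes "m > 0" "d > 0"
  shows "crossing_fiber m d e P = {n. P / (m + d) - e \<le> real_of_int n \<and> real_of_int n < P / m}"
  using assms by (auto simp: crossing_fiber_def field_simps)

lemma finite_crossing_fiber:
  assumes "m > 0" "d > 0"
  shows "finite (crossing_fiber m d e P)"
  unfolding crossing_fiber_eq_interval[OF assms] by (rule finite_int_interval)

lemma card_crossing_fiber_le:
  assumes "m > 0" "d > 0" "e \<ge> 0" "P \<ge> 0"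
  shows "real (card (crossing_fiber m d e P)) \<le> P * d / (m * (m + d)) + e + 1"
proof -
  have "P / (m + d) \<le> P / m"
    using assms by (intro divide_left_mono) auto
  then have "real (card (crossing_fiber m d e P)) \<le> P / m - (P / (m + d) - e) + 1"
    unfolding crossing_fiber_eq_interval[OF assms(1,2)] using assms(3)
    by (intro card_int_interval_le) linarith
  moreover have "P / m - P / (m + d) = P * d / (m * (m + d))"
    using assms by (simp add: field_simps)
  ultimately show ?thesis by linarith
qed

definition crossing_pairs :: "nat \<Rightarrow> nat \<Rightarrow> nat \<Rightarrow> nat \<Rightarrow> (int \<times> int) set" where
  "crossing_pairs q \<mu> \<nu> \<rho> = {(m, n).
     real q powi (int \<mu> - 1) \<le> real_of_int m \<and> real_of_int m < real q ^ \<mu> \<and>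
     real q powi (int \<nu> - 1) \<le> real_of_int n \<and> real_of_int n < real q ^ \<nu> \<and>
     Tq q (real_of_int m * real_of_int n) \<noteq>
       Tq q ((real_of_int m + real q powi (int \<mu> - int \<rho>)) * (real_of_int n + real q ^ \<rho>))}"

lemma crossing_pairs_subset:
  assumes q: "q \<ge> 2" and "\<rho> \<le> \<nu>"
  shows "crossing_pairs q \<mu> \<nu> \<rho> \<subseteq>
    (SIGMA m:{m. real q powi (int \<mu> - 1) \<le> real_of_int m \<and> real_of_int m < real q ^ \<mu>}.
      \<Union>k\<in>{int (\<mu> + \<nu>) - 1..int (\<mu> + \<nu>) + 1}.
        crossing_fiber (real_of_int m) (real q powi (int \<mu> - int \<rho>)) (real q ^ \<rho>) (real q powi k))"
    (is "_ \<subseteq> ?R")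
proof (rule subrelI)
  fix m n assume "(m, n) \<in> crossing_pairs q \<mu> \<nu> \<rho>"
  define d where "d = real q powi (int \<mu> - int \<rho>)"
  define e where "e = real q ^ \<rho>"
  have m: "real q powi (int \<mu> - 1) \<le> real_of_int m" "real_of_int m < real q ^ \<mu>"
    and n: "real q powi (int \<nu> - 1) \<le> real_of_int n" "real_of_int n < real q ^ \<nu>"
    and ne: "Tq q (real_of_int m * real_of_int n) \<noteq> Tq q ((real_of_int m + d) * (real_of_int n + e))"
    using \<open>(m, n) \<in> crossing_pairs q \<mu> \<nu> \<rho>\<close> by (auto simp: crossing_pairs_def d_def e_def)
  have q1: "real q > 1" using q by simp
  have "0 < real q powi (int \<mu> - 1)" "0 < real q powi (int \<nu> - 1)"
    using q1 by simp_all
  with m(1) n(1) have m0: "real_of_int m > 0" and n0: "real_of_int n > 0"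
    by linarith+
  have d0: "d > 0" and e0: "e > 0" using q1 by (simp_all add: d_def e_def)
  have "real_of_int m * real_of_int n \<le> (real_of_int m + d) * (real_of_int n + e)"
    using m0 n0 d0 e0 by (intro mult_mono) auto
  then obtain k where k: "real_of_int m * real_of_int n < real q powi k"
      "real q powi k \<le> (real_of_int m + d) * (real_of_int n + e)"
    using Tq_ne_imp_power_between[OF q _ _ ne] m0 n0 by auto
  have "real q powi (int (\<mu> + \<nu>) - 2) = real q powi (int \<mu> - 1) * real q powi (int \<nu> - 1)"
    using q1 by (simp flip: power_int_add)
  also have "\<dots> \<le> real_of_int m * real_of_int n"
    using m(1) n(1) m0 by (intro mult_mono) auto
  finally have "int (\<mu> + \<nu>) - 2 < k"
    using k(1) power_int_less_power_int_iff[OF q1] by (meson le_less_trans)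
  have "d \<le> real q ^ \<mu>"
    using q1 power_int_increasing[of "int \<mu> - int \<rho>" "int \<mu>" "real q"] by (simp add: d_def)
  moreover have "e \<le> real q ^ \<nu>"
    using q1 \<open>\<rho> \<le> \<nu>\<close> by (simp add: e_def power_increasing)
  ultimately have "(real_of_int m + d) * (real_of_int n + e) < (2 * real q ^ \<mu>) * (2 * real q ^ \<nu>)"
    using m n m0 n0 d0 e0 q1 by (intro mult_strict_mono) auto
  also have "\<dots> \<le> real q ^ 2 * real q ^ (\<mu> + \<nu>)"
    using q power_mono[of 2 "real q" 2] by (simp add: power_add)
  also have "\<dots> = real q powi (int (\<mu> + \<nu>) + 2)"
    using q1 by (simp add: power_int_add power_add)
  finally have "k < int (\<mu> + \<nu>) + 2"
    using k(2) power_int_less_power_int_iff[OF q1] by (meson le_less_trans)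
  with \<open>int (\<mu> + \<nu>) - 2 < k\<close> k m show "(m, n) \<in> ?R"
    by (auto simp: crossing_fiber_def d_def e_def)
qed

lemma card_crossing_fiber_power_le:
  assumes q: "q \<ge> 2" and "2 * \<rho> \<le> \<nu>"
    and m: "real q powi (int \<mu> - 1) \<le> m" and k: "k \<le> int (\<mu> + \<nu>) + 1"
  shows "real (card (crossing_fiber m (real q powi (int \<mu> - int \<rho>)) (real q ^ \<rho>) (real q powi k)))
           \<le> (real q ^ 3 + 2) * real q powi (int \<nu> - int \<rho>)"
proof -
  define d where "d = real q powi (int \<mu> - int \<rho>)"
  define E where "E = real q powi (int \<nu> - int \<rho>)"
  have q1: "real q > 1" using q by simp
  have m0: "0 < real q powi (int \<mu> - 1)" using q1 by simp
  with m have "m > 0" by linarith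
  have d0: "d > 0" using q1 by (simp add: d_def)
  have "real q powi k * d / (m * (m + d))
          \<le> real q powi (int (\<mu> + \<nu>) + 1) * d / (real q powi (int \<mu> - 1) * real q powi (int \<mu> - 1))"
    using m m0 \<open>m > 0\<close> d0 q1 k by (intro frac_le mult_mono mult_right_mono power_int_increasing) auto
  also have "\<dots> = real q ^ 3 * E"
  proof -
    have add: "real q powi a * real q powi b = real q powi (a + b)" for a b
      using q1 by (simp add: power_int_add)
    have "real q powi (int (\<mu> + \<nu>) + 1) * d
            = real q powi 3 * E * (real q powi (int \<mu> - 1) * real q powi (int \<mu> - 1))"
      unfolding d_def E_def add by (rule arg_cong[where f = "power_int (real q)"]) simp
    then show ?thesis using m0 by simp
  qed
  finally have "real q powi k * d / (m * (m + d)) \<le> real q ^ 3 * E" .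
  moreover have "real q ^ \<rho> \<le> E" and "1 \<le> E"
    using q1 \<open>2 * \<rho> \<le> \<nu>\<close> power_int_increasing[of "int \<rho>" "int \<nu> - int \<rho>" "real q"]
    by (auto simp: E_def)
  moreover have "real (card (crossing_fiber m d (real q ^ \<rho>) (real q powi k)))
      \<le> real q powi k * d / (m * (m + d)) + real q ^ \<rho> + 1"
    using \<open>m > 0\<close> d0 q1 by (intro card_crossing_fiber_le) auto
  ultimately show ?thesis by (simp add: d_def E_def algebra_simps)
qed

lemma card_crossing_pairs_le:
  assumes q: "q \<ge> 2" and "2 * \<rho> \<le> \<nu>"
  shows "real (card (crossing_pairs q \<mu> \<nu> \<rho>))
           \<le> 3 * (real q ^ 3 + 2) * real q powi (int \<mu> + int \<nu> - int \<rho>)"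
proof -
  define M where "M = {m. real q powi (int \<mu> - 1) \<le> real_of_int m \<and> real_of_int m < real q ^ \<mu>}"
  define K where "K = {int (\<mu> + \<nu>) - 1..int (\<mu> + \<nu>) + 1}"
  define G where "G m k =
    crossing_fiber (real_of_int m) (real q powi (int \<mu> - int \<rho>)) (real q ^ \<rho>) (real q powi k)"
    for m k
  define F where "F m = (\<Union>k\<in>K. G m k)" for m
  define E where "E = real q powi (int \<nu> - int \<rho>)"
  have q1: "real q > 1" using q by simp
  have M_sub: "M \<subseteq> {m. 1 \<le> real_of_int m \<and> real_of_int m < real q ^ \<mu>}"
  proof
    fix m assume "m \<in> M"
    moreover have "0 < real q powi (int \<mu> - 1)" using q1 by simp
    ultimately show "m \<in> {m. 1 \<le> real_of_int m \<and> real_of_int m < real q ^ \<mu>}"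
      by (auto simp: M_def)
  qed
  have "finite M"
    using finite_subset[OF M_sub finite_int_interval] .
  have "real (card M) \<le> real q ^ \<mu>"
    using card_mono[OF finite_int_interval M_sub] card_int_interval_le[of 1 "real q ^ \<mu>"] q1
    by fastforce
  have card_F: "finite (F m) \<and> real (card (F m)) \<le> 3 * ((real q ^ 3 + 2) * E)" if "m \<in> M" for m
  proof -
    have "real_of_int m > 0" using M_sub \<open>m \<in> M\<close> by fastforce
    have fiber: "finite (G m k) \<and> real (card (G m k)) \<le> (real q ^ 3 + 2) * E" if "k \<in> K" for k
      using that \<open>m \<in> M\<close> \<open>real_of_int m > 0\<close> q1
        card_crossing_fiber_power_le[OF q \<open>2 * \<rho> \<le> \<nu>\<close>] finite_crossing_fiber
      by (auto simp: M_def K_def E_def G_def)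
    have "real (card (F m)) \<le> (\<Sum>k\<in>K. real (card (G m k)))"
      unfolding F_def using card_UN_le[of K] of_nat_mono by (fastforce simp: K_def simp flip: of_nat_sum)
    also have "\<dots> \<le> (\<Sum>k\<in>K. (real q ^ 3 + 2) * E)"
      using fiber by (intro sum_mono) auto
    also have "\<dots> = 3 * ((real q ^ 3 + 2) * E)"
      by (simp add: K_def)
    finally show ?thesis
      using fiber by (auto simp: F_def K_def)
  qed
  have "crossing_pairs q \<mu> \<nu> \<rho> \<subseteq> Sigma M F"
    unfolding M_def F_def G_def K_def using assms by (intro crossing_pairs_subset) auto
  then have "card (crossing_pairs q \<mu> \<nu> \<rho>) \<le> card (Sigma M F)"
    using \<open>finite M\<close> card_F by (intro card_mono) auto
  also have "card (Sigma M F) = (\<Sum>m\<in>M. card (F m))"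
    using \<open>finite M\<close> card_F by (intro card_SigmaI) auto
  finally have "real (card (crossing_pairs q \<mu> \<nu> \<rho>)) \<le> (\<Sum>m\<in>M. real (card (F m)))"
    by (simp flip: of_nat_sum)
  also have "\<dots> \<le> real (card M) * (3 * ((real q ^ 3 + 2) * E))"
    using card_F by (intro sum_bounded_above) auto
  also have "\<dots> \<le> 3 * (real q ^ 3 + 2) * (real q ^ \<mu> * E)"
    using mult_right_mono[OF \<open>real (card M) \<le> real q ^ \<mu>\<close>, of "3 * ((real q ^ 3 + 2) * E)"] q1
    by (simp add: E_def algebra_simps)
  also have "real q ^ \<mu> * E = real q powi (int \<mu> + int \<nu> - int \<rho>)"
    using q1 power_int_add[of "real q" "int \<mu>" "int \<nu> - int \<rho>"] by (simp add: E_def add_diff_eq)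
  finally show ?thesis .
qed

theorem mainTheorem8:
  fixes q :: nat
  assumes "q \<ge> 2"
  shows "\<exists>C>0. \<forall>\<mu> \<nu> \<rho> :: nat. 2 * int \<rho> \<le> int \<nu> - 1 \<longrightarrow>
     real (card {(m :: int, n :: int).
        real q powi (int \<mu> - 1) \<le> real_of_int m \<and> real_of_int m < real q ^ \<mu> \<and>
        real q powi (int \<nu> - 1) \<le> real_of_int n \<and> real_of_int n < real q ^ \<nu> \<and>
        Tq q (real_of_int m * real_of_int n) \<noteq>
          Tq q ((real_of_int m + real q powi (int \<mu> - int \<rho>)) * (real_of_int n + real q ^ \<rho>))})
     \<le> C * ln (real q ^ (\<mu> + \<nu>)) * real q powi (int \<mu> + int \<nu> - int \<rho>)"
proof -
  define C where "C = 3 * (real q ^ 3 + 2) / ln 2"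
  have "C > 0" unfolding C_def by (intro divide_pos_pos mult_pos_pos add_nonneg_pos) auto
  moreover have "real (card (crossing_pairs q \<mu> \<nu> \<rho>))
      \<le> C * ln (real q ^ (\<mu> + \<nu>)) * real q powi (int \<mu> + int \<nu> - int \<rho>)"
    if "2 * int \<rho> \<le> int \<nu> - 1" for \<mu> \<nu> \<rho> :: nat
  proof -
    from that have "2 * \<rho> \<le> \<nu>" and "\<nu> \<ge> 1" by linarith+
    have "ln 2 \<le> ln (real q)" using assms by simp
    also have "\<dots> \<le> ln (real q ^ (\<mu> + \<nu>))"
      using assms \<open>\<nu> \<ge> 1\<close> by (simp add: ln_realpow)
    finally have "C * ln 2 \<le> C * ln (real q ^ (\<mu> + \<nu>))"
      using \<open>C > 0\<close> by (intro mult_left_mono) auto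
    then have "3 * (real q ^ 3 + 2) * real q powi (int \<mu> + int \<nu> - int \<rho>)
        \<le> C * ln (real q ^ (\<mu> + \<nu>)) * real q powi (int \<mu> + int \<nu> - int \<rho>)"
      by (intro mult_right_mono) (auto simp: C_def)
    with card_crossing_pairs_le[OF assms \<open>2 * \<rho> \<le> \<nu>\<close>] show ?thesis
      by (rule order.trans)
  qed
  ultimately show ?thesis unfolding crossing_pairs_def by blast
qed

end
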